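(* Let $(H,L_H)$ be a right-resolving labeled graph presenting a sofic shift $Y$. Then $(H,L_H)$ is regular if and only if the set $\mathcal R(L_H)$ of regular rays is dense in $X_H$.
   Context: A labeled graph $(H,L_H)$: finite directed graph (vertices $V_H$, edges $E_H$, source/terminal maps $s_H,t_H$) without sinks or sources, labeling $L_H:E_H\to A$, edge shift $X_H$; $L_H$ acts coordinatewise; $Y=L_H(X_H)$. Right-resolving: distinct edges with the same source have distinct labels. $f_H(v)=\{L_H(x): x$ a right-infinite path starting at $v\}$; for $y\in Y$, $F(y)=\{w\in Y[0,\infty): y_{(-\infty,-1]}w\in Y\}$ with $Y[0,\infty)=\{y_{[0,\infty)}:y\in Y\}$. A vertex $v$ is regular if there is $z\in X_H$ whose edge $z_{-1}$ ends at $v$ with $f_H(v)=F(L_H(z))$; $(H,L_H)$ is regular if all vertices are regular. For $x\in X_H$, $\mathbb U(x)=\{z\in X_H:\exists N\ \forall i\le N,\ z_i=x_i\}$ (similarly in $Y$); $x$ is a regular ray if $L_H$ maps $\mathbb U(x)$ onto $\mathbb U(L_H(x))$; $\mathcal R(L_H)$ is the set of regular rays. *)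

theory Defs
  imports "HOL-Analysis.Analysis"
begin

definition labeled_graph ::
  "'v set \<Rightarrow> 'e set \<Rightarrow> ('e \<Rightarrow> 'v) \<Rightarrow> ('e \<Rightarrow> 'v) \<Rightarrow> bool" where
  "labeled_graph V E s t \<longleftrightarrow> finite V \<and> finite E \<and>
     (\<forall>e\<in>E. s e \<in> V \<and> t e \<in> V) \<and>
     (\<forall>v\<in>V. (\<exists>e\<in>E. s e = v) \<and> (\<exists>e\<in>E. t e = v))"

definition edge_shift :: "'e set \<Rightarrow> ('e \<Rightarrow> 'v) \<Rightarrow> ('e \<Rightarrow> 'v) \<Rightarrow> (int \<Rightarrow> 'e) set" where
  "edge_shift E s t = {x. \<forall>i. x i \<in> E \<and> t (x i) = s (x (i + 1))}"

definition lab :: "('e \<Rightarrow> 'a) \<Rightarrow> (int \<Rightarrow> 'e) \<Rightarrow> (int \<Rightarrow> 'a)" where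
  "lab L x = (\<lambda>i. L (x i))"

definition sofic :: "'e set \<Rightarrow> ('e \<Rightarrow> 'v) \<Rightarrow> ('e \<Rightarrow> 'v) \<Rightarrow> ('e \<Rightarrow> 'a) \<Rightarrow> (int \<Rightarrow> 'a) set" where
  "sofic E s t L = lab L ` edge_shift E s t"

definition right_resolving :: "'e set \<Rightarrow> ('e \<Rightarrow> 'v) \<Rightarrow> ('e \<Rightarrow> 'a) \<Rightarrow> bool" where
  "right_resolving E s L \<longleftrightarrow>
     (\<forall>e1\<in>E. \<forall>e2\<in>E. e1 \<noteq> e2 \<and> s e1 = s e2 \<longrightarrow> L e1 \<noteq> L e2)"

definition follower_vertex ::
  "'e set \<Rightarrow> ('e \<Rightarrow> 'v) \<Rightarrow> ('e \<Rightarrow> 'v) \<Rightarrow> ('e \<Rightarrow> 'a) \<Rightarrow> 'v \<Rightarrow> (nat \<Rightarrow> 'a) set" where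
  "follower_vertex E s t L v =
     {(\<lambda>n. L (x n)) | x. (\<forall>n. x n \<in> E \<and> t (x n) = s (x (Suc n))) \<and> s (x 0) = v}"

definition right_rays :: "(int \<Rightarrow> 'a) set \<Rightarrow> (nat \<Rightarrow> 'a) set" where
  "right_rays Y = {(\<lambda>n. y (int n)) | y. y \<in> Y}"

definition glue :: "(int \<Rightarrow> 'a) \<Rightarrow> (nat \<Rightarrow> 'a) \<Rightarrow> (int \<Rightarrow> 'a)" where
  "glue y w = (\<lambda>i. if i < 0 then y i else w (nat i))"

definition follower_seq :: "(int \<Rightarrow> 'a) set \<Rightarrow> (int \<Rightarrow> 'a) \<Rightarrow> (nat \<Rightarrow> 'a) set" where
  "follower_seq Y y = {w \<in> right_rays Y. glue y w \<in> Y}"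

definition regular_vertex ::
  "'e set \<Rightarrow> ('e \<Rightarrow> 'v) \<Rightarrow> ('e \<Rightarrow> 'v) \<Rightarrow> ('e \<Rightarrow> 'a) \<Rightarrow> 'v \<Rightarrow> bool" where
  "regular_vertex E s t L v \<longleftrightarrow>
     (\<exists>z \<in> edge_shift E s t. t (z (-1)) = v \<and>
        follower_vertex E s t L v = follower_seq (sofic E s t L) (lab L z))"

definition regular_graph ::
  "'v set \<Rightarrow> 'e set \<Rightarrow> ('e \<Rightarrow> 'v) \<Rightarrow> ('e \<Rightarrow> 'v) \<Rightarrow> ('e \<Rightarrow> 'a) \<Rightarrow> bool" where
  "regular_graph V E s t L \<longleftrightarrow> (\<forall>v\<in>V. regular_vertex E s t L v)"

definition left_asym :: "(int \<Rightarrow> 'b) set \<Rightarrow> (int \<Rightarrow> 'b) \<Rightarrow> (int \<Rightarrow> 'b) set" where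
  "left_asym S x = {z \<in> S. \<exists>N. \<forall>i\<le>N. z i = x i}"

definition regular_ray ::
  "'e set \<Rightarrow> ('e \<Rightarrow> 'v) \<Rightarrow> ('e \<Rightarrow> 'v) \<Rightarrow> ('e \<Rightarrow> 'a) \<Rightarrow> (int \<Rightarrow> 'e) \<Rightarrow> bool" where
  "regular_ray E s t L x \<longleftrightarrow>
     lab L ` left_asym (edge_shift E s t) x = left_asym (sofic E s t L) (lab L x)"

definition regular_rays ::
  "'e set \<Rightarrow> ('e \<Rightarrow> 'v) \<Rightarrow> ('e \<Rightarrow> 'v) \<Rightarrow> ('e \<Rightarrow> 'a) \<Rightarrow> (int \<Rightarrow> 'e) set" where
  "regular_rays E s t L = {x \<in> edge_shift E s t. regular_ray E s t L x}"

definition shift_topology :: "'e set \<Rightarrow> (int \<Rightarrow> 'e) topology" where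
  "shift_topology E = product_topology (\<lambda>_. discrete_topology E) UNIV"

definition dense_in_shift :: "'e set \<Rightarrow> (int \<Rightarrow> 'e) set \<Rightarrow> (int \<Rightarrow> 'e) set \<Rightarrow> bool" where
  "dense_in_shift E X D \<longleftrightarrow> D \<subseteq> X \<and> (subtopology (shift_topology E) X) closure_of D = X"

end

(*
  A regular ray y witnesses regularity of the vertex s (y 0): since the graph is right-resolving,
  a path that agrees with y far in the past and carries the labels of y up to time 0 agrees
  with y at time -1, so F(L y) = f_H(s (y 0)). Density provides, for every vertex v, a regular
  ray whose edge at time 0 starts at v.

  Conversely, let every vertex u be regular via a point z_u. The terminal vertices of paths
  carrying the labels of z_u on [-n, -1] form a decreasing sequence of finite sets; by
  compactness (Koenig's lemma) every vertex of its limit ends a left-infinite path with the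
  labels of z_u, so a long enough label window of z_u already forces the future labels into
  f_H(u). Preceding an arbitrary point x by infinitely many such windows, chained from vertex
  to vertex, yields a point that agrees with x on a right half-line and has forcing positions
  arbitrarily far in the past. Every such point is a regular ray: a labeled point
  left-asymptotic to its label sequence is lifted by splicing at a forcing position.
*)

theory Submission
  imports Defs
begin

lemma edge_shift_iff: "x \<in> edge_shift E s t \<longleftrightarrow> (\<forall>i. x i \<in> E \<and> t (x i) = s (x (i + 1)))"
  by (simp add: edge_shift_def)

lemma edge_shift_prev: "x \<in> edge_shift E s t \<Longrightarrow> t (x (i - 1)) = s (x i)"
  unfolding edge_shift_iff by (metis diff_add_cancel)

(* With s and t swapped, right_path E t s q is a left-infinite path read backwards:
   q (Suc n) is the edge preceding q n. *)
definition right_path :: "'e set \<Rightarrow> ('e \<Rightarrow> 'v) \<Rightarrow> ('e \<Rightarrow> 'v) \<Rightarrow> (nat \<Rightarrow> 'e) \<Rightarrow> bool" where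
  "right_path E s t p \<longleftrightarrow> (\<forall>n. p n \<in> E \<and> t (p n) = s (p (Suc n)))"

lemma follower_vertex_iff:
  "w \<in> follower_vertex E s t L v \<longleftrightarrow> (\<exists>p. right_path E s t p \<and> s (p 0) = v \<and> w = (\<lambda>n. L (p n)))"
  unfolding follower_vertex_def right_path_def by auto

lemma right_path_funpow:
  assumes "e \<in> E" and "\<And>e. e \<in> E \<Longrightarrow> g e \<in> E \<and> s (g e) = t e"
  shows "right_path E s t (\<lambda>n. (g ^^ n) e)"
proof -
  have "(g ^^ n) e \<in> E" for n
    by (induction n) (use assms in auto)
  then show ?thesis
    using assms(2) unfolding right_path_def by simp
qed

lemma edge_shift_translate:
  assumes "x \<in> edge_shift E s t" shows "(\<lambda>j. x (j + c)) \<in> edge_shift E s t"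
proof -
  have "j + 1 + c = (j + c) + 1" for j :: int by simp
  then show ?thesis using assms unfolding edge_shift_iff by metis
qed

lemma right_path_forward: "x \<in> edge_shift E s t \<Longrightarrow> right_path E s t (\<lambda>n. x (i + int n))"
  by (simp add: edge_shift_iff right_path_def ac_simps)

lemma right_path_backward:
  assumes "x \<in> edge_shift E s t" shows "right_path E t s (\<lambda>n. x (i - 1 - int n))"
proof -
  have "i - 1 - int (Suc n) + 1 = i - 1 - int n" for n by simp
  then show ?thesis using assms unfolding edge_shift_iff right_path_def by metis
qed

lemma two_sided_path_in_edge_shift:
  assumes q: "right_path E t s q" and p: "right_path E s t p" and qp: "t (q 0) = s (p 0)"
  shows "(\<lambda>j. if j < i then q (nat (i - 1 - j)) else p (nat (j - i))) \<in> edge_shift E s t"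
  unfolding edge_shift_iff
proof
  fix j
  consider "j < i - 1" | "j = i - 1" | "i \<le> j" by linarith
  then show "(if j < i then q (nat (i - 1 - j)) else p (nat (j - i))) \<in> E \<and>
    t (if j < i then q (nat (i - 1 - j)) else p (nat (j - i))) =
    s (if j + 1 < i then q (nat (i - 1 - (j + 1))) else p (nat (j + 1 - i)))"
  proof cases
    case 1
    then have "nat (i - 1 - j) = Suc (nat (i - 1 - (j + 1)))" by simp
    then show ?thesis using q 1 unfolding right_path_def by auto
  next
    case 2
    then show ?thesis using q qp unfolding right_path_def by simp
  next
    case 3
    then have "nat (j + 1 - i) = Suc (nat (j - i))" by simp
    then show ?thesis using p 3 unfolding right_path_def by auto
  qed
qed

lemma right_resolving_path_agree:
  assumes rr: "right_resolving E s L" and x: "x \<in> edge_shift E s t" and y: "y \<in> edge_shift E s t"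
    and "x i = y i" and "i \<le> k" and "\<And>j. i < j \<Longrightarrow> j \<le> k \<Longrightarrow> L (x j) = L (y j)"
  shows "x k = y k"
  using \<open>i \<le> k\<close> assms(6)
proof (induction k rule: int_ge_induct)
  case base
  from \<open>x i = y i\<close> show ?case .
next
  case (step k)
  then have "x k = y k" by simp
  then have "s (x (k + 1)) = s (y (k + 1))"
    using x y unfolding edge_shift_iff by metis
  moreover have "L (x (k + 1)) = L (y (k + 1))" using step by simp
  ultimately show ?case
    using rr x y unfolding right_resolving_def edge_shift_iff by blast
qed

locale labeled_graph_data =
  fixes E :: "'e set" and s t :: "'e \<Rightarrow> 'v" and L :: "'e \<Rightarrow> 'a"
begin

abbreviation XH where "XH \<equiv> edge_shift E s t"
abbreviation Y where "Y \<equiv> sofic E s t L"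

lemma append_right_path:
  assumes y: "y \<in> XH" and p: "right_path E s t p" and yp: "s (p 0) = s (y i)"
  shows "(\<lambda>j. if j < i then y j else p (nat (j - i))) \<in> XH"
proof -
  have "t (y (i - 1 - int 0)) = s (p 0)"
    using edge_shift_prev[OF y, of i] yp by simp
  from two_sided_path_in_edge_shift[OF right_path_backward[OF y] p this, of i]
  show ?thesis by (simp cong: if_cong)
qed

lemma prepend_left_path:
  assumes l: "right_path E t s l" and x: "x \<in> XH" and lx: "t (l 0) = s (x a)"
  obtains y where "y \<in> XH" and "\<And>i. a \<le> i \<Longrightarrow> y i = x i" and "\<And>n. y (a - 1 - int n) = l n"
proof -
  define y where "y = (\<lambda>j. if j < a then l (nat (a - 1 - j)) else x (a + int (nat (j - a))))"
  have "y \<in> XH"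
    unfolding y_def using two_sided_path_in_edge_shift[OF l right_path_forward[OF x]] lx by simp
  moreover have "y i = x i" if "a \<le> i" for i
    using that unfolding y_def by simp
  moreover have "y (a - 1 - int n) = l n" for n
    unfolding y_def by simp
  ultimately show thesis by (rule that)
qed

lemma label_future_in_follower_vertex:
  "x \<in> XH \<Longrightarrow> (\<lambda>n. L (x (int n))) \<in> follower_vertex E s t L (s (x 0))"
  using right_path_forward[of x E s t 0] unfolding follower_vertex_iff by auto

lemma follower_vertex_subset_follower_seq:
  assumes q: "q \<in> XH"
  shows "follower_vertex E s t L (s (q 0)) \<subseteq> follower_seq Y (lab L q)"
proof
  fix w assume "w \<in> follower_vertex E s t L (s (q 0))"
  then obtain p where p: "right_path E s t p" "s (p 0) = s (q 0)" and w: "w = (\<lambda>n. L (p n))"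
    unfolding follower_vertex_iff by blast
  define x where "x = (\<lambda>j. if j < 0 then q j else p (nat j))"
  have "x \<in> XH"
    unfolding x_def using append_right_path[OF q p(1) p(2)] by (simp cong: if_cong)
  moreover have lx: "lab L x = glue (lab L q) w"
    unfolding x_def lab_def glue_def w by auto
  ultimately have "glue (lab L q) w \<in> Y"
    unfolding sofic_def by (metis image_eqI)
  moreover have "w = (\<lambda>n. glue (lab L q) w (int n))"
    unfolding glue_def by simp
  ultimately show "w \<in> follower_seq Y (lab L q)"
    unfolding follower_seq_def right_rays_def by blast
qed

lemma follower_seq_cong:
  assumes "\<And>j. j < 0 \<Longrightarrow> y j = y' j" shows "follower_seq Y y = follower_seq Y y'"
proof -
  have "glue y = glue y'" using assms unfolding glue_def by (simp add: fun_eq_iff)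
  then show ?thesis unfolding follower_seq_def by simp
qed

definition forcing_window :: "(int \<Rightarrow> 'e) \<Rightarrow> int \<Rightarrow> nat \<Rightarrow> bool" where
  "forcing_window y i n \<longleftrightarrow>
     (\<forall>z\<in>XH. (\<forall>j\<in>{i - int n..<i}. L (z j) = L (y j)) \<longrightarrow>
        (\<lambda>m. L (z (i + int m))) \<in> follower_vertex E s t L (s (y i)))"

lemma forcing_window_mono: "forcing_window y i n \<Longrightarrow> n \<le> m \<Longrightarrow> forcing_window y i m"
  unfolding forcing_window_def by auto

lemma forcing_window_transfer:
  assumes "forcing_window y' 0 n" and "s (y c) = s (y' 0)"
    and "\<And>j. - int n \<le> j \<Longrightarrow> j < 0 \<Longrightarrow> L (y (c + j)) = L (y' j)"
  shows "forcing_window y c n"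
  unfolding forcing_window_def
proof (intro ballI impI)
  fix z assume z: "z \<in> XH" and agree: "\<forall>j\<in>{c - int n..<c}. L (z j) = L (y j)"
  have window: "\<And>z'. z' \<in> XH \<Longrightarrow> (\<forall>j\<in>{0 - int n..<0}. L (z' j) = L (y' j)) \<Longrightarrow>
      (\<lambda>m. L (z' (0 + int m))) \<in> follower_vertex E s t L (s (y' 0))"
    using assms(1) unfolding forcing_window_def by blast
  have "\<forall>j\<in>{0 - int n..<0}. L (z (j + c)) = L (y' j)"
    using agree assms(3) by (simp add: add.commute)
  from window[OF edge_shift_translate[OF z] this]
  show "(\<lambda>m. L (z (c + int m))) \<in> follower_vertex E s t L (s (y c))"
    using assms(2) by (simp add: add.commute)
qed

lemma forcing_window_copy:
  assumes Zu: "z \<in> XH" "forcing_window z 0 n" and y: "y \<in> XH" and "0 < n"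
    and copy: "\<And>j. - int n \<le> j \<Longrightarrow> j < 0 \<Longrightarrow> y (c + j) = z j"
  shows "forcing_window y c n"
proof (rule forcing_window_transfer[OF Zu(2)])
  have "s (y c) = t (y (c + -1))"
    using edge_shift_prev[OF y, of c] by simp
  also have "\<dots> = s (z 0)"
    using copy[of "-1"] \<open>0 < n\<close> edge_shift_prev[OF Zu(1), of 0] by simp
  finally show "s (y c) = s (z 0)" .
qed (use copy in simp)

lemma regular_ray_if_forcing_unbounded:
  assumes y: "y \<in> XH" and forcing: "\<And>N. \<exists>i\<le>N. \<exists>n. forcing_window y i n"
  shows "y \<in> regular_rays E s t L"
proof -
  have "left_asym Y (lab L y) \<subseteq> lab L ` left_asym XH y"
  proof
    fix y' assume "y' \<in> left_asym Y (lab L y)"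
    then obtain z N where z: "z \<in> XH" "y' = lab L z" and agree: "\<forall>j\<le>N. y' j = L (y j)"
      unfolding left_asym_def sofic_def lab_def by auto
    obtain i n where "i \<le> N + 1" and "forcing_window y i n" using forcing by blast
    then have "(\<lambda>m. L (z (i + int m))) \<in> follower_vertex E s t L (s (y i))"
      using z agree unfolding forcing_window_def lab_def by auto
    then obtain p where p: "right_path E s t p" "s (p 0) = s (y i)"
      and Lp: "\<And>m. L (p m) = L (z (i + int m))"
      unfolding follower_vertex_iff by (metis)
    define z' where "z' = (\<lambda>j. if j < i then y j else p (nat (j - i)))"
    have "z' \<in> XH"
      unfolding z'_def using append_right_path[OF y p] .
    moreover have "\<forall>j\<le>i - 1. z' j = y j"
      unfolding z'_def by auto
    moreover have "lab L z' = y'"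
    proof
      fix j
      show "lab L z' j = y' j"
      proof (cases "j < i")
        case True
        then show ?thesis using agree \<open>i \<le> N + 1\<close> unfolding z'_def lab_def by auto
      next
        case False
        then have "i + int (nat (j - i)) = j" by simp
        then show ?thesis using False Lp z(2) unfolding z'_def lab_def by metis
      qed
    qed
    ultimately show "y' \<in> lab L ` left_asym XH y"
      unfolding left_asym_def by blast
  qed
  moreover have "lab L ` left_asym XH y \<subseteq> left_asym Y (lab L y)"
    unfolding left_asym_def sofic_def lab_def by fastforce
  ultimately show ?thesis
    unfolding regular_rays_def regular_ray_def using y by blast
qed

lemma regular_ray_follower_eq:
  assumes rr: "right_resolving E s L" and yR: "y \<in> regular_rays E s t L"
  shows "follower_vertex E s t L (s (y 0)) = follower_seq Y (lab L y)"
proof -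
  have y: "y \<in> XH" and reg: "regular_ray E s t L y"
    using yR unfolding regular_rays_def by auto
  have "follower_seq Y (lab L y) \<subseteq> follower_vertex E s t L (s (y 0))"
  proof
    fix w assume "w \<in> follower_seq Y (lab L y)"
    then have "glue (lab L y) w \<in> left_asym Y (lab L y)"
      unfolding follower_seq_def left_asym_def by (auto simp: glue_def intro: exI[of _ "-1"])
    then have "glue (lab L y) w \<in> lab L ` left_asym XH y"
      using reg unfolding regular_ray_def by simp
    then obtain z N where z: "z \<in> XH" "\<forall>j\<le>N. z j = y j" and Lz: "lab L z = glue (lab L y) w"
      unfolding left_asym_def by auto
    have Lz_neg: "L (z j) = L (y j)" if "j < 0" for j
    proof -
      have "lab L z j = lab L y j" using Lz that by (simp add: glue_def)
      then show ?thesis by (simp add: lab_def)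
    qed
    have "z (-1) = y (-1)"
      by (rule right_resolving_path_agree[OF rr z(1) y, of "min N (-1)"]) (use z(2) Lz_neg in auto)
    then have "s (z 0) = s (y 0)"
      using edge_shift_prev[OF z(1), of 0] edge_shift_prev[OF y, of 0] by simp
    moreover have "w = (\<lambda>n. L (z (int n)))"
    proof
      fix n
      have "lab L z (int n) = w n" using Lz by (simp add: glue_def)
      then show "w n = L (z (int n))" by (simp add: lab_def)
    qed
    ultimately show "w \<in> follower_vertex E s t L (s (y 0))"
      using label_future_in_follower_vertex[OF z(1)] by simp
  qed
  with follower_vertex_subset_follower_seq[OF y] show ?thesis by blast
qed

lemma regular_vertex_if_regular_ray:
  assumes rr: "right_resolving E s L" and yR: "y \<in> regular_rays E s t L"
  shows "regular_vertex E s t L (s (y 0))"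
proof -
  have y: "y \<in> XH" using yR unfolding regular_rays_def by auto
  then have "t (y (-1)) = s (y 0)" using edge_shift_prev[of y E s t 0] by simp
  then show ?thesis
    unfolding regular_vertex_def using y regular_ray_follower_eq[OF rr yR] by blast
qed

lemma topspace_shift_topology: "topspace (shift_topology E) = {x. \<forall>i. x i \<in> E}"
  unfolding shift_topology_def by (auto simp: PiE_UNIV_domain)

lemma edge_shift_subset_topspace: "XH \<subseteq> topspace (shift_topology E)"
  unfolding topspace_shift_topology by (auto simp: edge_shift_iff)

lemma openin_shift_cylinder:
  assumes "finite J" and "\<forall>i\<in>J. x i \<in> E"
  shows "openin (shift_topology E) (Pi\<^sub>E UNIV (\<lambda>i. if i \<in> J then {x i} else E))"
proof -
  have "{i. (if i \<in> J then {x i} else E) \<noteq> E} \<subseteq> J" by auto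
  then have "finite {i. (if i \<in> J then {x i} else E) \<noteq> E}"
    using assms(1) finite_subset by blast
  then show ?thesis
    unfolding shift_topology_def openin_PiE_gen using assms(2) by auto
qed

lemma closedin_shift_finitely_determined:
  assumes "finite J" and S: "S \<subseteq> topspace (shift_topology E)"
    and determined: "\<And>x y. x \<in> S \<Longrightarrow> y \<in> topspace (shift_topology E) \<Longrightarrow> \<forall>i\<in>J. y i = x i \<Longrightarrow> y \<in> S"
  shows "closedin (shift_topology E) S"
  unfolding closedin_def
proof (intro conjI S openin_subopen[THEN iffD2] ballI)
  fix x assume x: "x \<in> topspace (shift_topology E) - S"
  then have xE: "\<And>i. x i \<in> E" unfolding topspace_shift_topology by blast
  let ?C = "Pi\<^sub>E UNIV (\<lambda>i. if i \<in> J then {x i} else E)"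
  have "openin (shift_topology E) ?C"
    using openin_shift_cylinder[OF assms(1)] xE by blast
  moreover have "x \<in> ?C" using xE by (simp add: PiE_UNIV_domain)
  moreover have "?C \<subseteq> topspace (shift_topology E) - S"
  proof
    fix y assume yC: "y \<in> ?C"
    have yi: "y i \<in> (if i \<in> J then {x i} else E)" for i
      by (rule PiE_mem[OF yC UNIV_I])
    have "y i \<in> E" for i
      using yi[of i] xE[of i] by (cases "i \<in> J") auto
    moreover have "x i = y i" if "i \<in> J" for i
      using yi[of i] that by simp
    ultimately show "y \<in> topspace (shift_topology E) - S"
      using determined[of y x] x unfolding topspace_shift_topology by blast
  qed
  ultimately show "\<exists>T. openin (shift_topology E) T \<and> x \<in> T \<and> T \<subseteq> topspace (shift_topology E) - S"
    by blast
qed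

lemma closedin_edge_shift: "closedin (shift_topology E) XH"
proof -
  have "XH = (\<Inter>i. {x \<in> topspace (shift_topology E). t (x i) = s (x (i + 1))})"
    by (auto simp: edge_shift_iff topspace_shift_topology)
  moreover have "closedin (shift_topology E) {x \<in> topspace (shift_topology E). t (x i) = s (x (i + 1))}" for i
    by (rule closedin_shift_finitely_determined[of "{i, i + 1}"]) auto
  ultimately show ?thesis
    by (metis (no_types, lifting) closedin_INT UNIV_not_empty)
qed

lemma agree_if_in_shift_closure:
  assumes X: "X \<subseteq> topspace (shift_topology E)"
    and x: "x \<in> subtopology (shift_topology E) X closure_of D" and J: "finite J"
  shows "\<exists>y\<in>D. \<forall>i\<in>J. y i = x i"
proof -
  have "x \<in> X" using x unfolding in_closure_of by simp
  then have xE: "\<And>i. x i \<in> E" using X unfolding topspace_shift_topology by blast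
  let ?C = "Pi\<^sub>E UNIV (\<lambda>i. if i \<in> J then {x i} else E)"
  have "openin (shift_topology E) ?C"
    using openin_shift_cylinder[OF J] xE by blast
  then have "openin (subtopology (shift_topology E) X) (?C \<inter> X)"
    by (rule openin_subtopology_Int)
  moreover have "x \<in> ?C \<inter> X"
    using \<open>x \<in> X\<close> xE by (simp add: PiE_UNIV_domain)
  ultimately obtain y where y: "y \<in> D" "y \<in> ?C"
    using x unfolding in_closure_of by blast
  have "y i \<in> (if i \<in> J then {x i} else E)" for i
    by (rule PiE_mem[OF y(2) UNIV_I])
  then have "\<forall>i\<in>J. y i = x i"
    by (metis singletonD)
  then show ?thesis
    using y(1) by blast
qed

lemma in_shift_closure_if_agree:
  assumes X: "X \<subseteq> topspace (shift_topology E)" and D: "D \<subseteq> X" and x: "x \<in> X"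
    and agree: "\<And>J. finite J \<Longrightarrow> \<exists>y\<in>D. \<forall>i\<in>J. y i = x i"
  shows "x \<in> subtopology (shift_topology E) X closure_of D"
  unfolding in_closure_of
proof (intro conjI allI impI)
  show "x \<in> topspace (subtopology (shift_topology E) X)"
    using x X by auto
  fix T assume T: "x \<in> T \<and> openin (subtopology (shift_topology E) X) T"
  then obtain U where U: "openin (shift_topology E) U" "T = U \<inter> X"
    unfolding openin_subtopology by blast
  have "x \<in> U" using T U(2) by blast
  have "\<exists>Us. finite {i \<in> UNIV. Us i \<noteq> topspace (discrete_topology E)} \<and>
      (\<forall>i\<in>UNIV. openin (discrete_topology E) (Us i)) \<and> x \<in> Pi\<^sub>E UNIV Us \<and> Pi\<^sub>E UNIV Us \<subseteq> U"
    using U(1) \<open>x \<in> U\<close> unfolding shift_topology_def openin_product_topology_alt by (rule bspec)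
  then obtain Us where Us: "finite {i. Us i \<noteq> E}" "x \<in> Pi\<^sub>E UNIV Us" "Pi\<^sub>E UNIV Us \<subseteq> U"
    by auto
  obtain y where y: "y \<in> D" "\<forall>i\<in>{i. Us i \<noteq> E}. y i = x i"
    using agree[OF Us(1)] by blast
  have "y i \<in> Us i" for i
  proof (cases "Us i = E")
    case True
    then show ?thesis using y(1) D X unfolding topspace_shift_topology by blast
  next
    case False
    then show ?thesis using y(2) PiE_mem[OF Us(2) UNIV_I, of i] by simp
  qed
  then have "y \<in> Pi\<^sub>E UNIV Us" by (simp add: PiE_UNIV_domain)
  then show "\<exists>y. y \<in> D \<and> y \<in> T" using y(1) Us(3) U(2) D by blast
qed

lemma dense_in_shift_iff:
  assumes X: "X \<subseteq> topspace (shift_topology E)"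
  shows "dense_in_shift E X D \<longleftrightarrow> D \<subseteq> X \<and> (\<forall>x\<in>X. \<forall>J. finite J \<longrightarrow> (\<exists>y\<in>D. \<forall>i\<in>J. y i = x i))"
proof (intro iffI conjI ballI allI impI)
  assume dense: "dense_in_shift E X D"
  then show "D \<subseteq> X"
    unfolding dense_in_shift_def by blast
  fix x and J :: "int set" assume "x \<in> X" and "finite J"
  with dense show "\<exists>y\<in>D. \<forall>i\<in>J. y i = x i"
    unfolding dense_in_shift_def using agree_if_in_shift_closure[OF X] by blast
next
  assume agree: "D \<subseteq> X \<and> (\<forall>x\<in>X. \<forall>J. finite J \<longrightarrow> (\<exists>y\<in>D. \<forall>i\<in>J. y i = x i))"
  have "X \<subseteq> subtopology (shift_topology E) X closure_of D"
  proof
    fix x assume x: "x \<in> X"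
    show "x \<in> subtopology (shift_topology E) X closure_of D"
      by (rule in_shift_closure_if_agree[OF X conjunct1[OF agree] x]) (use agree x in blast)
  qed
  moreover have "subtopology (shift_topology E) X closure_of D \<subseteq> X"
    using closure_of_subset_topspace[of "subtopology (shift_topology E) X" D] X by auto
  ultimately show "dense_in_shift E X D"
    unfolding dense_in_shift_def using agree by blast
qed

end

lemma decseq_finite_stabilizes:
  fixes A :: "nat \<Rightarrow> 'a set"
  assumes dec: "decseq A" and fin: "finite (A 0)"
  obtains N where "\<And>n. A N \<subseteq> A n"
proof -
  have fin_n: "finite (A n)" for n
    using dec fin finite_subset unfolding decseq_def by blast
  obtain N where N: "\<And>n. card (A N) \<le> card (A n)"
    using ex_has_least_nat[of "\<lambda>_. True" 0 "\<lambda>n. card (A n)"] by auto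
  have "A N \<subseteq> A n" for n
  proof (cases "n \<le> N")
    case True
    then show ?thesis using dec unfolding decseq_def by blast
  next
    case False
    then have "A n \<subseteq> A N" using dec unfolding decseq_def by simp
    moreover have "card (A N) \<le> card (A n)" by (rule N)
    ultimately show ?thesis using card_subset_eq[OF fin_n] card_mono[OF fin_n] by (metis le_antisym)
  qed
  then show thesis by (rule that)
qed

locale sofic_presentation = labeled_graph_data E s t L
  for E :: "'e set" and s t :: "'e \<Rightarrow> 'v" and L :: "'e \<Rightarrow> 'a" +
  fixes V :: "'v set"
  assumes labeled_graph: "labeled_graph V E s t"
begin

lemma finite_E: "finite E" and finite_V: "finite V"
  using labeled_graph unfolding labeled_graph_def by auto

lemma source_in_V: "e \<in> E \<Longrightarrow> s e \<in> V" and target_in_V: "e \<in> E \<Longrightarrow> t e \<in> V"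
  using labeled_graph unfolding labeled_graph_def by auto

lemma ex_out_edge: "v \<in> V \<Longrightarrow> \<exists>e\<in>E. s e = v" and ex_in_edge: "v \<in> V \<Longrightarrow> \<exists>e\<in>E. t e = v"
  using labeled_graph unfolding labeled_graph_def by auto

lemma ex_edge_shift_through_vertex:
  assumes v: "v \<in> V"
  obtains x where "x \<in> XH" and "s (x 0) = v"
proof -
  have "\<forall>e\<in>E. \<exists>e'. e' \<in> E \<and> s e' = t e" using ex_out_edge target_in_V by blast
  then obtain next_edge where next_edge: "\<And>e. e \<in> E \<Longrightarrow> next_edge e \<in> E \<and> s (next_edge e) = t e"
    by metis
  have "\<forall>e\<in>E. \<exists>e'. e' \<in> E \<and> t e' = s e" using ex_in_edge source_in_V by blast
  then obtain prev_edge where prev_edge: "\<And>e. e \<in> E \<Longrightarrow> prev_edge e \<in> E \<and> t (prev_edge e) = s e"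
    by metis
  obtain e0 where e0: "e0 \<in> E" "s e0 = v" using ex_out_edge[OF v] by blast
  obtain f0 where f0: "f0 \<in> E" "t f0 = v" using ex_in_edge[OF v] by blast
  have "t ((prev_edge ^^ 0) f0) = s ((next_edge ^^ 0) e0)" using e0 f0 by simp
  from two_sided_path_in_edge_shift[OF right_path_funpow[of f0 E prev_edge t s, OF f0(1) prev_edge]
      right_path_funpow[of e0 E next_edge s t, OF e0(1) next_edge] this, of 0]
  show thesis by (rule that) (simp_all add: e0)
qed

lemma compact_space_shift_topology: "compact_space (shift_topology E)"
  unfolding shift_topology_def
  by (simp add: compact_space_product_topology compact_space_discrete_topology finite_E)

lemma left_labels_compactness:
  assumes windows: "\<And>n. \<exists>q\<in>XH. t (q (-1)) = v \<and> (\<forall>j\<in>{- int n..<0}. L (q j) = c j)"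
  shows "\<exists>q\<in>XH. t (q (-1)) = v \<and> (\<forall>j<0. L (q j) = c j)"
proof -
  define C where "C n = {q \<in> XH. t (q (-1)) = v \<and> (\<forall>j\<in>{- int n..<0}. L (q j) = c j)}" for n
  have "closedin (shift_topology E) (C n)" for n
  proof -
    let ?S = "{q \<in> topspace (shift_topology E). t (q (-1)) = v \<and> (\<forall>j\<in>{- int n..<0}. L (q j) = c j)}"
    have "closedin (shift_topology E) ?S"
    proof (rule closedin_shift_finitely_determined[of "insert (-1) {- int n..<0}"])
      fix x y assume "x \<in> ?S" "y \<in> topspace (shift_topology E)"
        "\<forall>i\<in>insert (-1) {- int n..<0}. y i = x i"
      then show "y \<in> ?S" by simp
    qed auto
    moreover have "C n = XH \<inter> ?S"
      unfolding C_def using edge_shift_subset_topspace by blast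
    ultimately show ?thesis
      using closedin_edge_shift by auto
  qed
  moreover have "C n \<noteq> {}" for n
    using windows[of n] unfolding C_def by blast
  moreover have "decseq C"
    unfolding decseq_def C_def by auto
  ultimately have "(\<Inter>n. C n) \<noteq> {}"
    by (rule compact_space_imp_nest[OF compact_space_shift_topology])
  then obtain q where q: "\<And>n. q \<in> C n" by blast
  have "L (q j) = c j" if "j < 0" for j
    using q[of "nat (- j)"] that unfolding C_def by auto
  moreover have "q \<in> XH" "t (q (-1)) = v"
    using q[of 0] unfolding C_def by auto
  ultimately show ?thesis by blast
qed

lemma forcing_window_exists:
  assumes z0: "z0 \<in> XH"
    and followers: "follower_seq Y (lab L z0) \<subseteq> follower_vertex E s t L (s (z0 0))"
  obtains N where "forcing_window z0 0 N"
proof -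
  define T where "T n = {v. \<exists>q\<in>XH. t (q (-1)) = v \<and> (\<forall>j\<in>{- int n..<0}. L (q j) = L (z0 j))}" for n
  have "decseq T"
    unfolding decseq_def T_def by force
  moreover have "finite (T 0)"
    by (rule finite_subset[OF _ finite_imageI[OF finite_E, of t]]) (unfold T_def edge_shift_def, blast)
  ultimately obtain N where N: "\<And>n. T N \<subseteq> T n"
    using decseq_finite_stabilizes by blast
  have "forcing_window z0 0 N"
    unfolding forcing_window_def
  proof (intro ballI impI)
    fix z assume z: "z \<in> XH" and agree: "\<forall>j\<in>{0 - int N..<0}. L (z j) = L (z0 j)"
    have "t (z (-1)) \<in> T n" for n
      using N z agree unfolding T_def by auto
    then have "\<exists>q\<in>XH. t (q (-1)) = t (z (-1)) \<and> (\<forall>j\<in>{- int n..<0}. L (q j) = L (z0 j))" for n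
      unfolding T_def by blast
    then obtain q where q: "q \<in> XH" "t (q (-1)) = t (z (-1))" and Lq: "\<forall>j<0. L (q j) = L (z0 j)"
      using left_labels_compactness[of "t (z (-1))" "\<lambda>j. L (z0 j)"] by blast
    have "s (z 0) = s (q 0)"
      using edge_shift_prev[OF z, of 0] edge_shift_prev[OF q(1), of 0] q(2) by simp
    have "(\<lambda>m. L (z (int m))) \<in> follower_vertex E s t L (s (q 0))"
      using label_future_in_follower_vertex[OF z] \<open>s (z 0) = s (q 0)\<close> by simp
    also have "\<dots> \<subseteq> follower_seq Y (lab L q)"
      by (rule follower_vertex_subset_follower_seq[OF q(1)])
    also have "\<dots> = follower_seq Y (lab L z0)"
      by (rule follower_seq_cong) (simp add: lab_def Lq)
    finally show "(\<lambda>m. L (z (0 + int m))) \<in> follower_vertex E s t L (s (z0 0))"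
      using followers by auto
  qed
  then show thesis by (rule that)
qed

lemma uniform_forcing_windows:
  assumes reg: "regular_graph V E s t L"
  obtains N Z where "0 < N"
    and "\<And>u. u \<in> V \<Longrightarrow> Z u \<in> XH \<and> t (Z u (-1)) = u \<and> forcing_window (Z u) 0 N"
proof -
  have "\<forall>u\<in>V. \<exists>z. z \<in> XH \<and> t (z (-1)) = u \<and> follower_vertex E s t L u = follower_seq Y (lab L z)"
    using reg unfolding regular_graph_def regular_vertex_def by blast
  then obtain Z where Z: "\<And>u. u \<in> V \<Longrightarrow> Z u \<in> XH \<and> t (Z u (-1)) = u \<and>
      follower_vertex E s t L u = follower_seq Y (lab L (Z u))"
    by metis
  have "\<forall>u\<in>V. \<exists>n. forcing_window (Z u) 0 n"
  proof
    fix u assume u: "u \<in> V"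
    then have "s (Z u 0) = u"
      using Z edge_shift_prev[of "Z u" E s t 0] by simp
    then show "\<exists>n. forcing_window (Z u) 0 n"
      using forcing_window_exists[of "Z u"] Z[OF u] by auto
  qed
  then obtain n where n: "\<And>u. u \<in> V \<Longrightarrow> forcing_window (Z u) 0 (n u)"
    by metis
  define N where "N = Suc (Max (n ` V))"
  have "forcing_window (Z u) 0 N" if "u \<in> V" for u
  proof -
    have "n u \<le> N"
      using Max_ge[OF finite_imageI[OF finite_V] imageI[OF that, of n]] unfolding N_def by simp
    then show ?thesis by (rule forcing_window_mono[OF n[OF that]])
  qed
  then show thesis
    using that[of N Z] Z unfolding N_def by simp
qed

lemma backward_block_path:
  assumes "0 < N" and Z: "\<And>u. u \<in> V \<Longrightarrow> Z u \<in> XH \<and> t (Z u (-1)) = u" and "u0 \<in> V"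
  obtains l where "right_path E t s l" and "t (l 0) = u0"
    and "\<And>k. \<exists>u\<in>V. \<forall>r<N. l (k * N + r) = Z u (- 1 - int r)"
proof -
  (* block k is the window of Z (u k); the next block must end where block k starts *)
  define u where "u = rec_nat u0 (\<lambda>_ v. s (Z v (- int N)))"
  have u_Suc: "u (Suc k) = s (Z (u k) (- int N))" for k
    unfolding u_def by simp
  have uV: "u k \<in> V" for k
  proof (induction k)
    case 0
    show ?case using \<open>u0 \<in> V\<close> by (simp add: u_def)
  next
    case (Suc k)
    then show ?case using u_Suc Z source_in_V unfolding edge_shift_iff by metis
  qed
  have ZX: "Z (u k) i \<in> E" "t (Z (u k) i) = s (Z (u k) (i + 1))" for k i
    using Z[OF uV] unfolding edge_shift_iff by auto
  have Zt: "t (Z (u k) (-1)) = u k" for k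
    using Z[OF uV] by blast
  define l where "l n = Z (u (n div N)) (- 1 - int (n mod N))" for n
  have "right_path E t s l"
    unfolding right_path_def
  proof
    fix n
    show "l n \<in> E \<and> s (l n) = t (l (Suc n))"
    proof (cases "Suc (n mod N) = N")
      case True
      then have "- 1 - int (n mod N) = - int N" by linarith
      then have "l n = Z (u (n div N)) (- int N)"
        unfolding l_def by simp
      moreover have "l (Suc n) = Z (u (Suc (n div N))) (-1)"
        unfolding l_def using True by (simp add: div_Suc mod_Suc)
      ultimately show ?thesis using ZX(1) Zt[of "Suc (n div N)"] u_Suc[of "n div N"] by simp
    next
      case False
      then have "l (Suc n) = Z (u (n div N)) (- 1 - int (n mod N) - 1)"
        unfolding l_def by (auto simp: div_Suc mod_Suc)
      then show ?thesis using ZX unfolding l_def by simp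
    qed
  qed
  moreover have "t (l 0) = u0"
    using Z[OF uV, of 0] unfolding l_def u_def by simp
  moreover have "\<forall>r<N. l (k * N + r) = Z (u k) (- 1 - int r)" for k
    unfolding l_def using \<open>0 < N\<close> by simp
  ultimately show thesis
    using that uV by blast
qed

lemma ex_regular_ray_eq_from:
  assumes reg: "regular_graph V E s t L" and x: "x \<in> XH"
  obtains y where "y \<in> regular_rays E s t L" and "\<And>i. a \<le> i \<Longrightarrow> y i = x i"
proof -
  obtain N Z where N: "0 < N"
    and Z: "\<And>u. u \<in> V \<Longrightarrow> Z u \<in> XH \<and> t (Z u (-1)) = u \<and> forcing_window (Z u) 0 N"
    using uniform_forcing_windows[OF reg] by blast
  have "s (x a) \<in> V"
    using x source_in_V unfolding edge_shift_iff by blast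
  then obtain l where l: "right_path E t s l" "t (l 0) = s (x a)"
    and blocks: "\<And>k. \<exists>u\<in>V. \<forall>r<N. l (k * N + r) = Z u (- 1 - int r)"
    using backward_block_path[OF N, of Z] Z by blast
  obtain y where y: "y \<in> XH" and right: "\<And>i. a \<le> i \<Longrightarrow> y i = x i"
    and left: "\<And>n. y (a - 1 - int n) = l n"
    using prepend_left_path[OF l(1) x l(2)] by blast
  have forcing: "forcing_window y (a - int (k * N)) N" for k
  proof -
    obtain u where u: "u \<in> V" and block: "\<And>r. r < N \<Longrightarrow> l (k * N + r) = Z u (- 1 - int r)"
      using blocks by blast
    have y_block: "y (a - int (k * N) + j) = Z u j" if "- int N \<le> j" "j < 0" for j
    proof -
      have "a - int (k * N) + j = a - 1 - int (k * N + nat (- 1 - j))"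
        using that by simp
      then have "y (a - int (k * N) + j) = l (k * N + nat (- 1 - j))"
        by (simp only: left)
      moreover have "nat (- 1 - j) < N" using that by auto
      ultimately show ?thesis
        using block that by simp
    qed
    show ?thesis
      using forcing_window_copy[of "Z u" N y] Z[OF u] y N y_block by blast
  qed
  have "\<exists>i\<le>M. \<exists>n. forcing_window y i n" for M
  proof -
    have "a - M \<le> int (nat (a - M))" by simp
    moreover have "int (nat (a - M)) \<le> int (nat (a - M) * N)"
      using N by (simp only: of_nat_le_iff) simp
    ultimately have "a - int (nat (a - M) * N) \<le> M" by linarith
    then show ?thesis using forcing by blast
  qed
  then have "y \<in> regular_rays E s t L"
    by (rule regular_ray_if_forcing_unbounded[OF y])
  then show thesis
    using right by (rule that)
qed

lemma dense_regular_rays_if_regular_graph: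
  assumes reg: "regular_graph V E s t L"
  shows "dense_in_shift E XH (regular_rays E s t L)"
  unfolding dense_in_shift_iff[OF edge_shift_subset_topspace]
proof (intro conjI ballI allI impI)
  show "regular_rays E s t L \<subseteq> XH"
    unfolding regular_rays_def by blast
  fix x and J :: "int set" assume x: "x \<in> XH" and "finite J"
  then obtain a where a: "\<And>i. i \<in> J \<Longrightarrow> a \<le> i"
    using bdd_below_finite unfolding bdd_below_def by blast
  obtain y where "y \<in> regular_rays E s t L" "\<And>i. a \<le> i \<Longrightarrow> y i = x i"
    using ex_regular_ray_eq_from[OF reg x] by blast
  then show "\<exists>y\<in>regular_rays E s t L. \<forall>i\<in>J. y i = x i"
    using a by blast
qed

lemma regular_graph_if_dense_regular_rays:
  assumes rr: "right_resolving E s L" and dense: "dense_in_shift E XH (regular_rays E s t L)"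
  shows "regular_graph V E s t L"
  unfolding regular_graph_def
proof
  fix v assume "v \<in> V"
  then obtain x where x: "x \<in> XH" "s (x 0) = v"
    by (rule ex_edge_shift_through_vertex)
  have "\<exists>y\<in>regular_rays E s t L. \<forall>i\<in>{0}. y i = x i"
    using dense x unfolding dense_in_shift_iff[OF edge_shift_subset_topspace] by blast
  then obtain y where "y \<in> regular_rays E s t L" "y 0 = x 0"
    by blast
  then show "regular_vertex E s t L v"
    using regular_vertex_if_regular_ray[OF rr] x(2) by metis
qed

end

theorem lemma3p11:
  fixes V :: "'v set" and E :: "'e set" and s t :: "'e \<Rightarrow> 'v" and L :: "'e \<Rightarrow> 'a"
  assumes "labeled_graph V E s t"
    and "right_resolving E s L"
  shows "regular_graph V E s t L \<longleftrightarrow>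
           dense_in_shift E (edge_shift E s t) (regular_rays E s t L)"
proof -
  interpret sofic_presentation E s t L V
    using assms(1) by unfold_locales
  show ?thesis
    using dense_regular_rays_if_regular_graph regular_graph_if_dense_regular_rays[OF assms(2)] by blast
qed

end
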